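(* Let $T$ be a tree on $n$ vertices, $q$ a positive integer and $C=(C_1,\dots,C_n)\in(\mathbb{Z}/q\mathbb{Z})^n$. Then the algorithm COMPUTE-EVAL-CSF$(T,q,C)$ described below terminates in $O(n^2(\log q)^2)$ time.
   Context: Algorithm COMPUTE-EVAL-SFS$(T,v,q,C)$, for a tree $T$ rooted at $v$: if $T$ is a single vertex, return the sequence $(1)$. Otherwise let $v_1,\dots,v_k$ be the neighbors of $v$ and $T_i$ the subtree rooted at $v_i$ (component of $T$ minus edge $\{v,v_i\}$ containing $v_i$). Initialize $r_1=1$, $r_j=0$ for $2\le j\le n$, and $d=1$. For $i=1,\dots,k$: copy $t_j\leftarrow r_j$ for $1\le j\le d$; recursively compute $(s_1,\dots,s_m)=$ COMPUTE-EVAL-SFS$(T_i,v_i,q,C)$ ($m$ = number of vertices of $T_i$); set $s_0\leftarrow C_1s_1+\dots+C_ms_m \bmod q$; replace $s_j\leftarrow -s_j$ for $1\le j\le m$; set $r_j\leftarrow0$ for $1\le j\le m+d$; for $1\le j\le d$ and $0\le p\le m$ set $r_{j+p}\leftarrow r_{j+p}+t_js_p \bmod q$; then $d\leftarrow d+m$. Return $(r_1,\dots,r_n)$. Algorithm COMPUTE-EVAL-CSF$(T,q,C)$: pick an arbitrary vertex $v$, compute $(r_1,\dots,r_n)=$ COMPUTE-EVAL-SFS$(T,v,q,C)$, and return $C_1r_1+\dots+C_nr_n \bmod q$. (This outputs the evaluation at $p_i\mapsto C_i$, modulo $q$, of the chromatic symmetric function of $T$ written as an integer polynomial in the power sums $p_1,\dots,p_n$.)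 Time is measured with arithmetic on residues mod $q$ costing $O((\log q)^2)$ per operation. *)

theory Defs
  imports Complex_Main
begin

text \<open>Rooted trees with ordered children: a vertex together with the list of subtrees
  rooted at its neighbours v_1, ..., v_k (in the order in which the algorithm visits them).\<close>
datatype rtree = Node "rtree list"

fun nvert :: "rtree \<Rightarrow> nat" where
  "nvert (Node ts) = Suc (sum_list (map nvert ts))"

text \<open>Bit length of q (number of binary digits); the cost of one arithmetic operation
  on residues mod q is (nbits q)^2, i.e. O((log q)^2), and at least 1.\<close>
definition nbits :: "int \<Rightarrow> nat" where
  "nbits q = (if q \<le> 0 then 0 else nat (floor (log 2 (real_of_int q))) + 1)"

definition cq :: "int \<Rightarrow> nat" where
  "cq q = (nbits q)^2"

text \<open>One iteration of the loop of COMPUTE-EVAL-SFS for a child.  Inputs: the current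
  vector r (list of length n, r!(j-1) = r_j), the current d, the result (s, cs) of the
  recursive call (s!(j-1) = s_j, cs its cost), and the cost c accumulated so far.  Every elementary operation on residues
  (copy, assignment, addition, multiplication, negation, reduction mod q) is charged
  cq q; loop bookkeeping is charged 1.\<close>
definition sfs_step ::
  "int \<Rightarrow> int list \<Rightarrow> int list \<Rightarrow> nat \<Rightarrow> int list \<times> nat \<Rightarrow> nat \<Rightarrow> int list \<times> nat \<times> nat" where
  "sfs_step q C r d sc c =
    (let s = fst sc; cs = snd sc; m = length s;
         t = take d r;
         s0 = (\<Sum>i<m. C ! i * s ! i) mod q;
         s' = s0 # map uminus s;
         r' = map (\<lambda>k. if k \<le> m + d
                        then (\<Sum>j\<in>{1..d}. if j \<le> k \<and> k - j \<le> m
                                             then t ! (j - 1) * s' ! (k - j) else 0) mod q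
                        else r ! (k - 1)) [1..<length r + 1];
         cost = (d + (2 * m + 1) + m + (m + d) + 3 * d * (m + 1)) * cq q + 2
     in (r', d + m, c + cs + cost))"

text \<open>COMPUTE-EVAL-SFS(T, v, q, C) with cost accounting: returns (r_1..r_n) and the cost.\<close>
fun sfs :: "int \<Rightarrow> int list \<Rightarrow> rtree \<Rightarrow> int list \<times> nat"
and sfs_loop :: "int \<Rightarrow> int list \<Rightarrow> rtree list \<Rightarrow> int list \<times> nat \<times> nat \<Rightarrow> int list \<times> nat \<times> nat"
where
  "sfs q C (Node ts) =
     (if ts = [] then ([1], 1)
      else (let n = nvert (Node ts);
                st = sfs_loop q C ts (1 # replicate (n - 1) 0, 1, 0)
            in (fst st, snd (snd st) + n * cq q + 1)))"
| "sfs_loop q C [] st = st"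
| "sfs_loop q C (t # ts) st =
     sfs_loop q C ts (sfs_step q C (fst st) (fst (snd st)) (sfs q C t) (snd (snd st)))"

definition eval_csf :: "int \<Rightarrow> int list \<Rightarrow> rtree \<Rightarrow> int \<times> nat" where
  "eval_csf q C T =
     (let res = sfs q C T; r = fst res; n = length r
      in ((\<Sum>i<n. C ! i * r ! i) mod q, snd res + (2 * n + 1) * cq q + 1))"

end

theory Submission
  imports Defs
begin

text \<open>COMPUTE-EVAL-SFS on a tree with n vertices costs at most 8 n^2 operations.
  For the loop over the children this follows from the invariant
  c + (d + 7) k \<le> 8 d^2 k, where c is the cost accumulated so far, d the number of
  vertices covered so far and k the cost of one operation: processing a child with m
  vertices costs at most 8 m^2 k recursively plus O(d m) k for the polynomial product,
  and 8 (d + m)^2 - 8 d^2 - 8 m^2 = 16 d m leaves room for the latter.\<close>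

lemma nvert_ge_1: "1 \<le> nvert t"
  by (cases t) auto

lemma cq_ge_1: "0 < q \<Longrightarrow> 1 \<le> cq q"
  by (simp add: cq_def nbits_def)

lemma length_sfs_step: "length (fst (sfs_step q C r d sc c)) = length r"
  by (simp add: sfs_step_def Let_def del: upt_Suc)

lemma degree_sfs_step: "fst (snd (sfs_step q C r d sc c)) = d + length (fst sc)"
  by (simp add: sfs_step_def Let_def)

lemma cost_sfs_step:
  "snd (snd (sfs_step q C r d sc c)) = c + snd sc +
     ((d + (2 * m + 1) + m + (m + d) + 3 * d * (m + 1)) * cq q + 2)"
  if "m = length (fst sc)"
  using that by (simp add: sfs_step_def Let_def)

lemma length_sfs:
  "length (fst (sfs q C T)) = nvert T"
  "length (fst (sfs_loop q C ts st)) = length (fst st) \<and>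
   fst (snd (sfs_loop q C ts st)) = fst (snd st) + sum_list (map nvert ts)"
  by (induction q C T and q C ts st rule: sfs_sfs_loop.induct)
     (auto simp: Let_def length_sfs_step degree_sfs_step)

lemma sfs_step_cost_le:
  fixes d m k :: nat
  assumes "1 \<le> d" "1 \<le> m" "1 \<le> k"
  shows "(d + (2 * m + 1) + m + (m + d) + 3 * d * (m + 1)) * k + 2 + m * k \<le> 16 * d * m * k"
proof -
  have "d \<le> d * m" "m \<le> d * m" "1 \<le> d * m"
    using assms(1,2) by simp_all
  then have "5 * d + 5 * m + 3 * d * m + 3 \<le> 16 * d * m"
    by linarith
  then have "(5 * d + 5 * m + 3 * d * m + 3) * k \<le> 16 * d * m * k"
    by (rule mult_right_mono) simp
  then show ?thesis
    using assms(3) by (simp add: algebra_simps)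
qed

definition sfs_loop_inv :: "nat \<Rightarrow> int list \<times> nat \<times> nat \<Rightarrow> bool" where
  "sfs_loop_inv k st \<longleftrightarrow>
     (let d = fst (snd st); c = snd (snd st) in 1 \<le> d \<and> c + (d + 7) * k \<le> 8 * d\<^sup>2 * k)"

lemma sfs_loop_inv_step:
  fixes c cs d m k :: nat
  assumes "1 \<le> d" "1 \<le> m" "1 \<le> k"
    and inv: "c + (d + 7) * k \<le> 8 * d\<^sup>2 * k"
    and child: "cs \<le> 8 * m\<^sup>2 * k"
  shows "c + cs + ((d + (2 * m + 1) + m + (m + d) + 3 * d * (m + 1)) * k + 2)
           + (d + m + 7) * k \<le> 8 * (d + m)\<^sup>2 * k"
proof -
  have "8 * (d + m)\<^sup>2 * k = 8 * d\<^sup>2 * k + 8 * m\<^sup>2 * k + 16 * d * m * k"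
    by (simp add: power2_eq_square algebra_simps)
  then show ?thesis
    using sfs_step_cost_le[OF assms(1-3)] inv child by (simp add: algebra_simps)
qed

lemma cost_sfs:
  "1 \<le> cq q \<Longrightarrow> snd (sfs q C T) \<le> 8 * (nvert T)\<^sup>2 * cq q"
  "1 \<le> cq q \<Longrightarrow> sfs_loop_inv (cq q) st \<Longrightarrow> sfs_loop_inv (cq q) (sfs_loop q C ts st)"
proof (induction q C T and q C ts st rule: sfs_sfs_loop.induct)
  case (1 q C ts)
  show ?case
  proof (cases "ts = []")
    case False
    define n where "n = nvert (Node ts)"
    define st where "st = sfs_loop q C ts (1 # replicate (n - 1) 0, 1, 0)"
    have "sfs_loop_inv (cq q) (1 # replicate (n - 1) 0, 1, 0)"
      by (simp add: sfs_loop_inv_def)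
    with 1 False have "sfs_loop_inv (cq q) st"
      unfolding n_def st_def by blast
    moreover have "fst (snd st) = n"
      using length_sfs(2)[of q C ts] by (simp add: st_def n_def)
    ultimately have "snd (snd st) + (n + 7) * cq q \<le> 8 * n\<^sup>2 * cq q"
      by (simp add: sfs_loop_inv_def)
    moreover have "sfs q C (Node ts) = (fst st, snd (snd st) + n * cq q + 1)"
      using False by (simp add: n_def st_def Let_def)
    ultimately show ?thesis
      using "1.prems" by (simp add: n_def algebra_simps)
  qed (use "1.prems" in simp)
next
  case (2 q C st)
  then show ?case by simp
next
  case (3 q C t ts st)
  obtain r d c where st: "st = (r, d, c)" by (cases st)
  define m where "m = nvert t"
  have m: "m = length (fst (sfs q C t))"
    by (simp add: m_def length_sfs(1))
  have "sfs_loop_inv (cq q) (sfs_step q C r d (sfs q C t) c)"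
    using "3.prems" "3.IH"(1)[OF "3.prems"(1)] sfs_loop_inv_step[of d m "cq q" c]
      nvert_ge_1[of t]
    by (simp add: st sfs_loop_inv_def degree_sfs_step cost_sfs_step[OF m] flip: m m_def)
  with "3.IH"(2) "3.prems"(1) show ?case
    by (simp add: st)
qed

theorem lemma3p9:
  "\<exists>K::nat. \<forall>(T::rtree) (q::int) (C::int list).
     q > 0 \<longrightarrow> length C = nvert T \<longrightarrow> set C \<subseteq> {0..<q} \<longrightarrow>
     snd (eval_csf q C T) \<le> K * (nvert T)^2 * (nbits q)^2"
proof (intro exI allI impI)
  fix T :: rtree and q :: int and C :: "int list"
  assume "q > 0"
  then have k: "1 \<le> cq q" by (rule cq_ge_1)
  define n where "n = nvert T"
  have "1 \<le> n" unfolding n_def by (rule nvert_ge_1)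
  then have "n \<le> n * n" "1 \<le> n * n"
    by simp_all
  then have "2 * n + 2 \<le> 4 * n\<^sup>2"
    unfolding power2_eq_square by linarith
  then have "(2 * n + 1) * cq q + 1 \<le> 4 * n\<^sup>2 * cq q"
    using mult_right_mono[of "2 * n + 2" "4 * n\<^sup>2" "cq q"] k by (simp add: algebra_simps)
  moreover have "snd (eval_csf q C T) = snd (sfs q C T) + (2 * n + 1) * cq q + 1"
    by (simp add: eval_csf_def Let_def length_sfs(1) n_def)
  ultimately show "snd (eval_csf q C T) \<le> 12 * (nvert T)^2 * (nbits q)^2"
    using cost_sfs(1)[OF k, of C T] by (simp add: n_def cq_def)
qed

end
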